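(* Let $n\ge 3$ and let $F_n^1$, $F_n^2$ be the complex Leibniz algebras on basis $\{e_1,\dots,e_n\}$ with nonzero products $[e_1,e_1]=e_3$, $[e_i,e_1]=e_{i+1}$ ($2\le i\le n-1$) for $F_n^1$, and $[e_1,e_1]=e_3$, $[e_i,e_1]=e_{i+1}$ ($3\le i\le n-1$) for $F_n^2$. Then $\dim\mathrm{Bider}(F_n^1)=2n+1$ and $\dim\mathrm{Bider}(F_n^2)=2n+3$.
   Context: Leibniz algebras are right Leibniz: $[x,[y,z]]=[[x,y],z]-[[x,z],y]$. A derivation is a linear $d$ with $d([x,y])=[d(x),y]+[x,d(y)]$; an anti-derivation is a linear $D$ with $D([x,y])=[D(x),y]-[D(y),x]$; a biderivation is a pair $(d,D)$ of a derivation and an anti-derivation with $[x,d(y)]=[x,D(y)]$ for all $x,y$; $\mathrm{Bider}(L)$ is the complex vector space of all biderivations of $L$. *)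

theory Defs
  imports Complex_Main "HOL-Library.Function_Algebras" "HOL-Library.Product_Plus"
begin

definition vecsp :: "nat \<Rightarrow> (nat \<Rightarrow> complex) set" where
  "vecsp n = {v. \<forall>i. v i \<noteq> 0 \<longrightarrow> i \<in> {1..n}}"

definition e :: "nat \<Rightarrow> nat \<Rightarrow> complex" where
  "e i = (\<lambda>k. if k = i then 1 else 0)"

definition bracket :: "nat \<Rightarrow> (nat \<Rightarrow> nat \<Rightarrow> nat \<Rightarrow> complex)
     \<Rightarrow> (nat \<Rightarrow> complex) \<Rightarrow> (nat \<Rightarrow> complex) \<Rightarrow> (nat \<Rightarrow> complex)" where
  "bracket n c x y = (\<lambda>k. if k \<in> {1..n} then
      (\<Sum>i\<in>{1..n}. \<Sum>j\<in>{1..n}. x i * y j * c i j k) else 0)"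

definition F1 :: "nat \<Rightarrow> nat \<Rightarrow> nat \<Rightarrow> nat \<Rightarrow> complex" where
  "F1 n i j k = (if j = 1 \<and> ((i = 1 \<and> k = 3) \<or> (2 \<le> i \<and> i \<le> n - 1 \<and> k = i + 1)) then 1 else 0)"

definition F2 :: "nat \<Rightarrow> nat \<Rightarrow> nat \<Rightarrow> nat \<Rightarrow> complex" where
  "F2 n i j k = (if j = 1 \<and> ((i = 1 \<and> k = 3) \<or> (3 \<le> i \<and> i \<le> n - 1 \<and> k = i + 1)) then 1 else 0)"

type_synonym endo = "(nat \<Rightarrow> complex) \<Rightarrow> (nat \<Rightarrow> complex)"

text \<open>Complex-linear endomorphism of vecsp n; normalised to be 0 outside vecsp n,
  so that each linear map has a unique representative.\<close>
definition lin_endo :: "nat \<Rightarrow> endo \<Rightarrow> bool" where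
  "lin_endo n f \<longleftrightarrow>
     (\<forall>x\<in>vecsp n. f x \<in> vecsp n) \<and>
     (\<forall>x\<in>vecsp n. \<forall>y\<in>vecsp n. f (x + y) = f x + f y) \<and>
     (\<forall>a. \<forall>x\<in>vecsp n. f (\<lambda>k. a * x k) = (\<lambda>k. a * f x k)) \<and>
     (\<forall>x. x \<notin> vecsp n \<longrightarrow> f x = 0)"

definition is_derivation :: "nat \<Rightarrow> (nat \<Rightarrow> nat \<Rightarrow> nat \<Rightarrow> complex) \<Rightarrow> endo \<Rightarrow> bool" where
  "is_derivation n c d \<longleftrightarrow> lin_endo n d \<and>
     (\<forall>x\<in>vecsp n. \<forall>y\<in>vecsp n.
        d (bracket n c x y) = bracket n c (d x) y + bracket n c x (d y))"

definition is_antiderivation :: "nat \<Rightarrow> (nat \<Rightarrow> nat \<Rightarrow> nat \<Rightarrow> complex) \<Rightarrow> endo \<Rightarrow> bool" where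
  "is_antiderivation n c D \<longleftrightarrow> lin_endo n D \<and>
     (\<forall>x\<in>vecsp n. \<forall>y\<in>vecsp n.
        D (bracket n c x y) = bracket n c (D x) y - bracket n c (D y) x)"

definition Bider :: "nat \<Rightarrow> (nat \<Rightarrow> nat \<Rightarrow> nat \<Rightarrow> complex) \<Rightarrow> (endo \<times> endo) set" where
  "Bider n c = {(d, D). is_derivation n c d \<and> is_antiderivation n c D \<and>
     (\<forall>x\<in>vecsp n. \<forall>y\<in>vecsp n. bracket n c x (d y) = bracket n c x (D y))}"

definition pscale :: "complex \<Rightarrow> endo \<times> endo \<Rightarrow> endo \<times> endo" where
  "pscale a p = ((\<lambda>x k. a * fst p x k), (\<lambda>x k. a * snd p x k))"

definition cdim :: "(endo \<times> endo) set \<Rightarrow> nat" where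
  "cdim S = Vector_Spaces.vector_space.dim pscale S"

end

theory Submission
  imports Defs
begin

(* A biderivation (d, D) is the same as a pair of matrices (A, B) solving a linear system:
   the derivation, anti-derivation and compatibility identities evaluated on basis vectors.
   For F_n^1 and F_n^2 the identity d[e_i, e_1] = [d e_i, e_1] + [e_i, d e_1] forces
   A(r + 1, k + 1) = A(r, k) for r >= 3, so A is constant along diagonals and is determined by
   its last row and a few entries in its first two rows; the other identities leave of B only
   its first column and some entries of its second column. This singles out 2n + 1
   (resp. 2n + 3) matrix positions such that a solution vanishing at all of them is zero, and
   for each position there is an explicit solution with entry 1 there and 0 at the others.
   These solutions form a basis of Bider. *)

type_synonym matrix = "nat \<Rightarrow> nat \<Rightarrow> complex"

section \<open>Dimension from a biorthogonal system\<close>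

lemma (in vector_space) dim_eq_card_biorthogonal:
  fixes V :: "'b set" and bvec :: "'i \<Rightarrow> 'b" and coord :: "'i \<Rightarrow> 'b \<Rightarrow> 'a"
  assumes fin: "finite I" and bvec_in: "\<And>i. i \<in> I \<Longrightarrow> bvec i \<in> V" and V: "subspace V"
    and coord_add: "\<And>i x y. coord i (x + y) = coord i x + coord i y"
    and coord_scale: "\<And>i a x. coord i (a *s x) = a * coord i x"
    and biorth: "\<And>i j. i \<in> I \<Longrightarrow> j \<in> I \<Longrightarrow> coord i (bvec j) = (if i = j then 1 else 0)"
    and determined: "\<And>v. v \<in> V \<Longrightarrow> (\<And>i. i \<in> I \<Longrightarrow> coord i v = 0) \<Longrightarrow> v = 0"
  shows "dim V = card I"
proof -
  have coord_0: "coord i 0 = 0" for i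
    using coord_scale[of i 0 0] by simp
  have coord_comb: "coord i (\<Sum>j\<in>I. u j *s bvec j) = u i" if "i \<in> I" for i u
  proof -
    have "coord i (\<Sum>j\<in>J. u j *s bvec j) = (\<Sum>j\<in>J. u j * coord i (bvec j))" if "finite J" for J
      using that by (induction J rule: finite_induct) (simp_all add: coord_0 coord_add coord_scale)
    also have "(\<Sum>j\<in>I. u j * coord i (bvec j)) = (\<Sum>j\<in>I. if i = j then u j else 0)"
      using \<open>i \<in> I\<close> by (intro sum.cong) (auto simp: biorth)
    also have "\<dots> = u i"
      using \<open>i \<in> I\<close> fin by simp
    finally show ?thesis using fin by simp
  qed
  have inj: "inj_on bvec I"
    by (rule inj_onI) (metis biorth zero_neq_one)
  have indep: "independent (bvec ` I)"
  proof (rule independent_if_scalars_zero)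
    fix f x assume "(\<Sum>x\<in>bvec ` I. f x *s x) = 0" and "x \<in> bvec ` I"
    then obtain i where "i \<in> I" "x = bvec i" and "(\<Sum>j\<in>I. f (bvec j) *s bvec j) = 0"
      by (auto simp: sum.reindex[OF inj])
    then show "f x = 0" using coord_comb[of i "f \<circ> bvec"] coord_0 by simp
  qed (use fin in simp)
  have spans: "V \<subseteq> span (bvec ` I)"
  proof
    fix v assume v: "v \<in> V"
    define w where "w = (\<Sum>i\<in>I. coord i v *s bvec i)"
    have w: "w \<in> V" "w \<in> span (bvec ` I)"
      unfolding w_def using V bvec_in
      by (auto intro!: subspace_sum subspace_scale) (auto intro!: span_sum span_scale span_base)
    have "coord i (v - w) = 0" if "i \<in> I" for i
      using coord_add[of i "v - w" w] coord_comb[OF that, of "\<lambda>i. coord i v"] by (simp add: w_def)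
    then have "v - w = 0" using determined subspace_diff[OF V v w(1)] by blast
    then show "v \<in> span (bvec ` I)" using w(2) by simp
  qed
  have "dim V = card (bvec ` I)"
    using dim_unique[OF _ spans indep refl] bvec_in by blast
  then show ?thesis using card_image[OF inj] by simp
qed

section \<open>Linear maps of vecsp n as matrices\<close>

lemma sum_apply: "finite A \<Longrightarrow> sum f A x = (\<Sum>a\<in>A. f a x)"
  by (induction A rule: finite_induct) auto

lemma sum_e_mult: "j \<in> {1..n} \<Longrightarrow> (\<Sum>j'\<in>{1..n}. e j j' * f j') = (f j :: complex)"
  by (simp add: e_def if_distrib[of "\<lambda>z. z * _"] cong: if_cong)

lemma sum_e_e_mult:
  assumes "i \<in> {1..n}" "j \<in> {1..n}"
  shows "(\<Sum>i'\<in>{1..n}. \<Sum>j'\<in>{1..n}. e i i' * e j j' * P i' j') = (P i j :: complex)"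
proof -
  have "(\<Sum>j'\<in>{1..n}. e i i' * e j j' * P i' j') = e i i' * P i' j" for i'
    using sum_e_mult[OF assms(2), of "\<lambda>j'. e i i' * P i' j'"] by (simp add: mult_ac)
  then show ?thesis
    using sum_e_mult[OF assms(1)] by simp
qed

lemma vecsp_outside: "x \<in> vecsp n \<Longrightarrow> k \<notin> {1..n} \<Longrightarrow> x k = 0"
  unfolding vecsp_def by blast

lemma vecsp_add: "x \<in> vecsp n \<Longrightarrow> y \<in> vecsp n \<Longrightarrow> x + y \<in> vecsp n"
  unfolding vecsp_def by (simp add: not_less_eq_eq) (metis add_0)

lemma vecsp_scale: "x \<in> vecsp n \<Longrightarrow> (\<lambda>k. a * x k) \<in> vecsp n"
  unfolding vecsp_def by auto

lemma vecsp_sum: "finite J \<Longrightarrow> (\<And>j. j \<in> J \<Longrightarrow> g j \<in> vecsp n) \<Longrightarrow> sum g J \<in> vecsp n"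
  by (induction J rule: finite_induct) (simp_all add: vecsp_add, simp add: vecsp_def)

lemma e_in_vecsp: "j \<in> {1..n} \<Longrightarrow> e j \<in> vecsp n"
  unfolding vecsp_def e_def by auto

lemma vecsp_eq_sum_e: "x \<in> vecsp n \<Longrightarrow> x = (\<Sum>j\<in>{1..n}. (\<lambda>k. x j * e j k))"
  by (rule ext) (auto simp: sum_apply e_def vecsp_def if_distrib[of "\<lambda>z. _ * z"] cong: if_cong)

lemma vecsp_0: "0 \<in> vecsp n"
  by (simp add: vecsp_def)

lemma lin_endo_0: "lin_endo n f \<Longrightarrow> f 0 = 0"
proof -
  assume "lin_endo n f"
  then have "f (\<lambda>k. 0 * (0::nat \<Rightarrow> complex) k) = (\<lambda>k. 0 * f 0 k)"
    using vecsp_0 unfolding lin_endo_def by blast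
  then show ?thesis by (simp add: zero_fun_def)
qed

lemma lin_endo_sum:
  assumes f: "lin_endo n f" and "finite J" and "\<And>j. j \<in> J \<Longrightarrow> g j \<in> vecsp n"
  shows "f (sum g J) = (\<Sum>j\<in>J. f (g j))"
  using assms(2,3)
proof (induction J rule: finite_induct)
  case empty
  then show ?case using lin_endo_0[OF f] by (simp only: sum.empty)
next
  case (insert a J)
  have "f (sum g (insert a J)) = f (g a + sum g J)"
    using insert by simp
  also have "\<dots> = f (g a) + f (sum g J)"
    using insert f vecsp_sum[of J g n] by (simp add: lin_endo_def)
  also have "\<dots> = f (g a) + (\<Sum>j\<in>J. f (g j))"
    using insert by simp
  finally show ?case
    by (simp only: sum.insert[OF insert.hyps(1,2)])
qed

definition endo_of_matrix :: "nat \<Rightarrow> matrix \<Rightarrow> endo" where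
  "endo_of_matrix n A = (\<lambda>x. if x \<in> vecsp n
     then (\<lambda>k. if k \<in> {1..n} then \<Sum>j\<in>{1..n}. A k j * x j else 0) else 0)"

definition matrix_of :: "endo \<Rightarrow> matrix" where
  "matrix_of f k j = f (e j) k"

lemma lin_endo_eq_endo_of_matrix:
  assumes f: "lin_endo n f"
  shows "f = endo_of_matrix n (matrix_of f)"
proof
  fix x
  show "f x = endo_of_matrix n (matrix_of f) x"
  proof (cases "x \<in> vecsp n")
    case False
    then show ?thesis using f by (simp add: lin_endo_def endo_of_matrix_def)
  next
    case x: True
    have "f x = (\<Sum>j\<in>{1..n}. f (\<lambda>k. x j * e j k))"
      by (subst vecsp_eq_sum_e[OF x], rule lin_endo_sum[OF f])
        (auto intro!: vecsp_scale[OF e_in_vecsp])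
    also have "\<dots> = (\<Sum>j\<in>{1..n}. (\<lambda>k. x j * f (e j) k))"
      using f e_in_vecsp by (auto simp: lin_endo_def intro!: sum.cong)
    finally have fx: "f x = (\<Sum>j\<in>{1..n}. (\<lambda>k. x j * f (e j) k))" .
    have "f x \<in> vecsp n" using f x by (simp add: lin_endo_def)
    then show ?thesis
      using x by (auto simp: fx endo_of_matrix_def matrix_of_def sum_apply mult.commute fun_eq_iff
          dest: vecsp_outside)
  qed
qed

lemma lin_endo_endo_of_matrix: "lin_endo n (endo_of_matrix n A)"
  unfolding lin_endo_def
proof (intro conjI ballI allI impI)
  fix x y assume "x \<in> vecsp n" "y \<in> vecsp n"
  then show "endo_of_matrix n A (x + y) = endo_of_matrix n A x + endo_of_matrix n A y"
    by (auto simp: endo_of_matrix_def fun_eq_iff distrib_left sum.distrib vecsp_add)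
next
  fix a x assume "x \<in> vecsp n"
  then show "endo_of_matrix n A (\<lambda>k. a * x k) = (\<lambda>k. a * endo_of_matrix n A x k)"
    by (auto simp: endo_of_matrix_def fun_eq_iff sum_distrib_left mult_ac vecsp_scale)
qed (auto simp: endo_of_matrix_def vecsp_def)

lemma matrix_of_endo_of_matrix:
  "k \<in> {1..n} \<Longrightarrow> j \<in> {1..n} \<Longrightarrow> matrix_of (endo_of_matrix n A) k j = A k j"
  using e_in_vecsp[of j n]
  by (simp add: matrix_of_def endo_of_matrix_def e_def if_distrib[of "\<lambda>z. _ * z"] cong: if_cong)

lemma endo_of_matrix_eq_0:
  "(\<And>k j. k \<in> {1..n} \<Longrightarrow> j \<in> {1..n} \<Longrightarrow> A k j = 0) \<Longrightarrow> endo_of_matrix n A = 0"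
  by (auto simp: endo_of_matrix_def fun_eq_iff)

lemma endo_of_matrix_add: "endo_of_matrix n A + endo_of_matrix n A' = endo_of_matrix n (A + A')"
  by (auto simp: endo_of_matrix_def fun_eq_iff distrib_right sum.distrib)

lemma endo_of_matrix_scale:
  "(\<lambda>x k. a * endo_of_matrix n A x k) = endo_of_matrix n (\<lambda>k j. a * A k j)"
  by (auto simp: endo_of_matrix_def fun_eq_iff sum_distrib_left mult_ac)

lemma sum_rotate3:
  "(\<Sum>a\<in>A. \<Sum>b\<in>B. \<Sum>c\<in>C. f a b c) = (\<Sum>b\<in>B. \<Sum>c\<in>C. \<Sum>a\<in>A. f a b c)"
  by (subst sum.swap) (simp add: sum.swap[of _ A])

lemma coeff_endo_of_matrix_bracket:
  assumes "k \<in> {1..n}"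
  shows "endo_of_matrix n A (bracket n c x y) k =
    (\<Sum>i\<in>{1..n}. \<Sum>j\<in>{1..n}. x i * y j * (\<Sum>m\<in>{1..n}. c i j m * A k m))"
proof -
  have "bracket n c x y \<in> vecsp n" by (auto simp: vecsp_def bracket_def)
  then show ?thesis
    using assms by (simp add: endo_of_matrix_def bracket_def sum_distrib_left mult_ac)
      (rule sum_rotate3)
qed

lemma coeff_bracket_endo_of_matrix_left:
  assumes "k \<in> {1..n}" "x \<in> vecsp n"
  shows "bracket n c (endo_of_matrix n A x) y k =
    (\<Sum>i\<in>{1..n}. \<Sum>j\<in>{1..n}. x i * y j * (\<Sum>a\<in>{1..n}. A a i * c a j k))"
  using assms
  by (simp add: endo_of_matrix_def bracket_def sum_distrib_left sum_distrib_right mult_ac)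
    (subst sum_rotate3, rule sum.swap)

lemma coeff_bracket_endo_of_matrix_right:
  assumes "k \<in> {1..n}" "y \<in> vecsp n"
  shows "bracket n c x (endo_of_matrix n A y) k =
    (\<Sum>i\<in>{1..n}. \<Sum>j\<in>{1..n}. x i * y j * (\<Sum>b\<in>{1..n}. A b j * c i b k))"
  using assms
  by (simp add: endo_of_matrix_def bracket_def sum_distrib_left sum_distrib_right mult_ac)
    (intro sum.cong refl sum.swap)

lemma bracket_outside: "k \<notin> {1..n} \<Longrightarrow> bracket n c x y k = 0"
  unfolding bracket_def by auto

lemma endo_of_matrix_outside: "k \<notin> {1..n} \<Longrightarrow> endo_of_matrix n A x k = 0"
  unfolding endo_of_matrix_def by auto

section \<open>Biderivations as solutions of a linear system\<close>

lemma bilinear_eq_iff_coeffs: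
  fixes L R :: "(nat \<Rightarrow> complex) \<Rightarrow> (nat \<Rightarrow> complex) \<Rightarrow> nat \<Rightarrow> complex"
  assumes L: "\<And>x y k. x \<in> vecsp n \<Longrightarrow> y \<in> vecsp n \<Longrightarrow> k \<in> {1..n} \<Longrightarrow>
        L x y k = (\<Sum>i\<in>{1..n}. \<Sum>j\<in>{1..n}. x i * y j * P i j k)"
    and R: "\<And>x y k. x \<in> vecsp n \<Longrightarrow> y \<in> vecsp n \<Longrightarrow> k \<in> {1..n} \<Longrightarrow>
        R x y k = (\<Sum>i\<in>{1..n}. \<Sum>j\<in>{1..n}. x i * y j * Q i j k)"
    and outside: "\<And>x y k. k \<notin> {1..n} \<Longrightarrow> L x y k = R x y k"
  shows "(\<forall>x\<in>vecsp n. \<forall>y\<in>vecsp n. L x y = R x y) \<longleftrightarrow>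
         (\<forall>i\<in>{1..n}. \<forall>j\<in>{1..n}. \<forall>k\<in>{1..n}. P i j k = Q i j k)"
proof
  assume LR: "\<forall>x\<in>vecsp n. \<forall>y\<in>vecsp n. L x y = R x y"
  show "\<forall>i\<in>{1..n}. \<forall>j\<in>{1..n}. \<forall>k\<in>{1..n}. P i j k = Q i j k"
  proof (intro ballI)
    fix i j k assume i: "i \<in> {1..n}" and j: "j \<in> {1..n}" and k: "k \<in> {1..n}"
    have "P i j k = L (e i) (e j) k"
      using L[OF e_in_vecsp[OF i] e_in_vecsp[OF j] k] sum_e_e_mult[OF i j] by simp
    also have "\<dots> = R (e i) (e j) k"
      using LR e_in_vecsp[OF i] e_in_vecsp[OF j] by simp
    also have "\<dots> = Q i j k"
      using R[OF e_in_vecsp[OF i] e_in_vecsp[OF j] k] sum_e_e_mult[OF i j] by simp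
    finally show "P i j k = Q i j k" .
  qed
next
  assume PQ: "\<forall>i\<in>{1..n}. \<forall>j\<in>{1..n}. \<forall>k\<in>{1..n}. P i j k = Q i j k"
  show "\<forall>x\<in>vecsp n. \<forall>y\<in>vecsp n. L x y = R x y"
  proof (intro ballI ext)
    fix x y k assume x: "x \<in> vecsp n" and y: "y \<in> vecsp n"
    show "L x y k = R x y k"
    proof (cases "k \<in> {1..n}")
      case True
      then show ?thesis using L[OF x y True] R[OF x y True] PQ by simp
    qed (rule outside)
  qed
qed

definition bider_eqs ::
    "nat \<Rightarrow> (nat \<Rightarrow> nat \<Rightarrow> nat \<Rightarrow> complex) \<Rightarrow> matrix \<Rightarrow> matrix \<Rightarrow> bool" where
  "bider_eqs n c A B \<longleftrightarrow>
     (\<forall>i\<in>{1..n}. \<forall>j\<in>{1..n}. \<forall>k\<in>{1..n}. (\<Sum>m\<in>{1..n}. c i j m * A k m) =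
        (\<Sum>a\<in>{1..n}. A a i * c a j k) + (\<Sum>a\<in>{1..n}. A a j * c i a k)) \<and>
     (\<forall>i\<in>{1..n}. \<forall>j\<in>{1..n}. \<forall>k\<in>{1..n}. (\<Sum>m\<in>{1..n}. c i j m * B k m) =
        (\<Sum>a\<in>{1..n}. B a i * c a j k) - (\<Sum>a\<in>{1..n}. B a j * c a i k)) \<and>
     (\<forall>i\<in>{1..n}. \<forall>j\<in>{1..n}. \<forall>k\<in>{1..n}.
        (\<Sum>a\<in>{1..n}. A a j * c i a k) = (\<Sum>a\<in>{1..n}. B a j * c i a k))"

lemma derivation_iff_coeffs:
  "(\<forall>x\<in>vecsp n. \<forall>y\<in>vecsp n. endo_of_matrix n A (bracket n c x y) =
      bracket n c (endo_of_matrix n A x) y + bracket n c x (endo_of_matrix n A y)) \<longleftrightarrow>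
   (\<forall>i\<in>{1..n}. \<forall>j\<in>{1..n}. \<forall>k\<in>{1..n}. (\<Sum>m\<in>{1..n}. c i j m * A k m) =
      (\<Sum>a\<in>{1..n}. A a i * c a j k) + (\<Sum>a\<in>{1..n}. A a j * c i a k))"
proof (rule bilinear_eq_iff_coeffs)
  fix x y k assume "x \<in> vecsp n" "y \<in> vecsp n" "k \<in> {1..n}"
  then show "(bracket n c (endo_of_matrix n A x) y + bracket n c x (endo_of_matrix n A y)) k =
    (\<Sum>i\<in>{1..n}. \<Sum>j\<in>{1..n}. x i * y j *
       ((\<Sum>a\<in>{1..n}. A a i * c a j k) + (\<Sum>a\<in>{1..n}. A a j * c i a k)))"
    by (simp only: plus_fun_apply coeff_bracket_endo_of_matrix_left
        coeff_bracket_endo_of_matrix_right distrib_left sum.distrib)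
qed (simp_all add: coeff_endo_of_matrix_bracket bracket_outside endo_of_matrix_outside)

lemma antiderivation_iff_coeffs:
  "(\<forall>x\<in>vecsp n. \<forall>y\<in>vecsp n. endo_of_matrix n B (bracket n c x y) =
      bracket n c (endo_of_matrix n B x) y - bracket n c (endo_of_matrix n B y) x) \<longleftrightarrow>
   (\<forall>i\<in>{1..n}. \<forall>j\<in>{1..n}. \<forall>k\<in>{1..n}. (\<Sum>m\<in>{1..n}. c i j m * B k m) =
      (\<Sum>a\<in>{1..n}. B a i * c a j k) - (\<Sum>a\<in>{1..n}. B a j * c a i k))"
proof (rule bilinear_eq_iff_coeffs)
  fix x y k assume x: "x \<in> vecsp n" and y: "y \<in> vecsp n" and k: "k \<in> {1..n}"
  have "bracket n c (endo_of_matrix n B y) x k =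
      (\<Sum>j\<in>{1..n}. \<Sum>i\<in>{1..n}. y j * x i * (\<Sum>a\<in>{1..n}. B a j * c a i k))"
    by (rule coeff_bracket_endo_of_matrix_left[OF k y])
  also have "\<dots> = (\<Sum>i\<in>{1..n}. \<Sum>j\<in>{1..n}. x i * y j * (\<Sum>a\<in>{1..n}. B a j * c a i k))"
    by (subst sum.swap) (simp only: mult.commute[of "y _" "x _"])
  finally have Byx: "bracket n c (endo_of_matrix n B y) x k =
      (\<Sum>i\<in>{1..n}. \<Sum>j\<in>{1..n}. x i * y j * (\<Sum>a\<in>{1..n}. B a j * c a i k))" .
  show "(bracket n c (endo_of_matrix n B x) y - bracket n c (endo_of_matrix n B y) x) k =
    (\<Sum>i\<in>{1..n}. \<Sum>j\<in>{1..n}. x i * y j *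
       ((\<Sum>a\<in>{1..n}. B a i * c a j k) - (\<Sum>a\<in>{1..n}. B a j * c a i k)))"
    by (simp only: minus_apply coeff_bracket_endo_of_matrix_left[OF k x] Byx
        right_diff_distrib sum_subtractf)
qed (simp_all add: coeff_endo_of_matrix_bracket bracket_outside endo_of_matrix_outside)

lemma compatibility_iff_coeffs:
  "(\<forall>x\<in>vecsp n. \<forall>y\<in>vecsp n.
      bracket n c x (endo_of_matrix n A y) = bracket n c x (endo_of_matrix n B y)) \<longleftrightarrow>
   (\<forall>i\<in>{1..n}. \<forall>j\<in>{1..n}. \<forall>k\<in>{1..n}.
      (\<Sum>a\<in>{1..n}. A a j * c i a k) = (\<Sum>a\<in>{1..n}. B a j * c i a k))"
  by (rule bilinear_eq_iff_coeffs)
    (simp_all only: coeff_bracket_endo_of_matrix_right, simp add: bracket_outside)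

interpretation endo_pairs: vector_space pscale
  by unfold_locales (auto simp: pscale_def fun_eq_iff algebra_simps prod_eq_iff)

lemma endo_of_matrix_in_Bider_iff:
  "(endo_of_matrix n A, endo_of_matrix n B) \<in> Bider n c \<longleftrightarrow> bider_eqs n c A B"
  unfolding Bider_def is_derivation_def is_antiderivation_def bider_eqs_def
  by (simp only: mem_Collect_eq case_prod_conv lin_endo_endo_of_matrix simp_thms
      derivation_iff_coeffs antiderivation_iff_coeffs compatibility_iff_coeffs)

lemma Bider_iff_matrices:
  "p \<in> Bider n c \<longleftrightarrow>
    (\<exists>A B. p = (endo_of_matrix n A, endo_of_matrix n B) \<and> bider_eqs n c A B)"
proof -
  have "p = (endo_of_matrix n (matrix_of (fst p)), endo_of_matrix n (matrix_of (snd p)))"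
    if "p \<in> Bider n c"
    using that lin_endo_eq_endo_of_matrix
    by (auto simp: Bider_def is_derivation_def is_antiderivation_def prod_eq_iff)
  then show ?thesis
    using endo_of_matrix_in_Bider_iff by metis
qed

lemma bider_eqs_0: "bider_eqs n c 0 0"
  by (simp add: bider_eqs_def)

lemma bider_eqs_add:
  "bider_eqs n c A B \<Longrightarrow> bider_eqs n c A' B' \<Longrightarrow> bider_eqs n c (A + A') (B + B')"
  unfolding bider_eqs_def by (simp add: distrib_left distrib_right sum.distrib)

lemma bider_eqs_scale:
  "bider_eqs n c A B \<Longrightarrow> bider_eqs n c (\<lambda>k j. a * A k j) (\<lambda>k j. a * B k j)"
  unfolding bider_eqs_def
  by (simp add: mult.assoc sum_distrib_left[symmetric] distrib_left[symmetric]
      right_diff_distrib[symmetric] mult.left_commute[of _ a])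

lemma Bider_subspace: "endo_pairs.subspace (Bider n c)"
proof (rule endo_pairs.subspaceI)
  show "0 \<in> Bider n c"
    using endo_of_matrix_in_Bider_iff[of n 0 0 c] bider_eqs_0
    by (simp add: zero_prod_def endo_of_matrix_eq_0)
next
  fix p q assume "p \<in> Bider n c" "q \<in> Bider n c"
  then show "p + q \<in> Bider n c"
    unfolding Bider_iff_matrices by (auto simp: endo_of_matrix_add) (blast intro: bider_eqs_add)
next
  fix a p assume "p \<in> Bider n c"
  then show "pscale a p \<in> Bider n c"
    unfolding Bider_iff_matrices
    by (auto simp: pscale_def endo_of_matrix_scale) (blast intro: bider_eqs_scale)
qed

definition pair_entry :: "bool \<times> nat \<times> nat \<Rightarrow> matrix \<times> matrix \<Rightarrow> complex" where
  "pair_entry p M = (if fst p then snd M else fst M) (fst (snd p)) (snd (snd p))"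

lemma dim_Bider_eq_card:
  fixes I :: "(bool \<times> nat \<times> nat) set" and bas :: "bool \<times> nat \<times> nat \<Rightarrow> matrix \<times> matrix"
  assumes fin: "finite I" and I_range: "\<And>s r k. (s, r, k) \<in> I \<Longrightarrow> r \<in> {1..n} \<and> k \<in> {1..n}"
    and bas_eqs: "\<And>p. p \<in> I \<Longrightarrow> bider_eqs n c (fst (bas p)) (snd (bas p))"
    and biorth: "\<And>p q. p \<in> I \<Longrightarrow> q \<in> I \<Longrightarrow> pair_entry p (bas q) = (if p = q then 1 else 0)"
    and determined: "\<And>A B. bider_eqs n c A B \<Longrightarrow> (\<And>p. p \<in> I \<Longrightarrow> pair_entry p (A, B) = 0) \<Longrightarrow>
        \<forall>r\<in>{1..n}. \<forall>k\<in>{1..n}. A r k = 0 \<and> B r k = 0"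
  shows "cdim (Bider n c) = card I"
proof -
  define coord where "coord p v = pair_entry p (matrix_of (fst v), matrix_of (snd v))" for p v
  have coord_endo: "coord p (endo_of_matrix n A, endo_of_matrix n B) = pair_entry p (A, B)"
    if "p \<in> I" for p A B
    using that I_range
    by (cases p rule: prod_cases3) (auto simp: coord_def pair_entry_def matrix_of_endo_of_matrix)
  show ?thesis
    unfolding cdim_def
  proof (rule endo_pairs.dim_eq_card_biorthogonal[OF fin _ Bider_subspace])
    fix p assume "p \<in> I"
    then show "(endo_of_matrix n (fst (bas p)), endo_of_matrix n (snd (bas p))) \<in> Bider n c"
      using bas_eqs endo_of_matrix_in_Bider_iff by blast
  next
    show "coord p (v + w) = coord p v + coord p w" for p v w
      by (simp add: coord_def pair_entry_def matrix_of_def)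
    show "coord p (pscale a v) = a * coord p v" for p a v
      by (simp add: coord_def pair_entry_def matrix_of_def pscale_def)
  next
    fix p q assume "p \<in> I" "q \<in> I"
    then show "coord p (endo_of_matrix n (fst (bas q)), endo_of_matrix n (snd (bas q))) =
        (if p = q then 1 else 0)"
      using coord_endo biorth by simp
  next
    fix v assume "v \<in> Bider n c" and coords: "\<And>p. p \<in> I \<Longrightarrow> coord p v = 0"
    then obtain A B where v: "v = (endo_of_matrix n A, endo_of_matrix n B)" and "bider_eqs n c A B"
      by (auto simp: Bider_iff_matrices)
    then have "\<forall>r\<in>{1..n}. \<forall>k\<in>{1..n}. A r k = 0 \<and> B r k = 0"
      using determined coords coord_endo by simp
    then show "v = 0"
      unfolding v zero_prod_def by (metis endo_of_matrix_eq_0)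
  qed
qed

section \<open>The filiform algebras\<close>

lemma diagonal_shift_eq:
  fixes M :: "nat \<Rightarrow> nat \<Rightarrow> 'a"
  assumes step: "\<And>r k. rlo \<le> r \<Longrightarrow> r < n \<Longrightarrow> klo \<le> k \<Longrightarrow> k < n \<Longrightarrow> M (r + 1) (k + 1) = M r k"
    and "rlo \<le> r" "klo \<le> k" "r + t \<le> n" "k + t \<le> n"
  shows "M (r + t) (k + t) = M r k"
  using assms(4,5)
proof (induction t)
  case (Suc t)
  then show ?case
    using step[of "r + t" "k + t"] assms(2,3) by simp
qed simp

lemma diagonal_shift_vanishes:
  fixes M :: "nat \<Rightarrow> nat \<Rightarrow> 'a::zero"
  assumes step: "\<And>r k. rlo \<le> r \<Longrightarrow> r < n \<Longrightarrow> klo \<le> k \<Longrightarrow> k < n \<Longrightarrow> M (r + 1) (k + 1) = M r k"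
    and last_row: "\<And>k. klo \<le> k \<Longrightarrow> k \<le> n \<Longrightarrow> M n k = 0"
    and last_col: "\<And>r. rlo \<le> r \<Longrightarrow> r \<le> n \<Longrightarrow> M r n = 0"
    and "rlo \<le> r" "r \<le> n" "klo \<le> k" "k \<le> n"
  shows "M r k = 0"
proof -
  define t where "t = n - max r k"
  have "M r k = M (r + t) (k + t)"
    using diagonal_shift_eq[where M = M and rlo = rlo and klo = klo and n = n, OF step, of r k t]
      assms(4-7)
    by (simp add: t_def)
  moreover have "r + t = n \<or> k + t = n"
    using assms(5,7) by (auto simp: t_def)
  ultimately show ?thesis
    using last_row last_col assms(4-7) by (auto simp: t_def)
qed

definition succ_idx :: "nat \<Rightarrow> nat" where
  "succ_idx i = (if i = 1 then 3 else i + 1)"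

definition has_succ :: "nat \<Rightarrow> bool \<Rightarrow> nat \<Rightarrow> bool" where
  "has_succ n b i \<longleftrightarrow> 1 \<le> i \<and> i < n \<and> (b \<or> i \<noteq> 2)"

definition filiform :: "nat \<Rightarrow> bool \<Rightarrow> nat \<Rightarrow> nat \<Rightarrow> nat \<Rightarrow> complex" where
  "filiform n b i j k = (if j = 1 \<and> has_succ n b i \<and> k = succ_idx i then 1 else 0)"

lemma F1_eq_filiform: "3 \<le> n \<Longrightarrow> F1 n = filiform n True"
  by (auto simp: fun_eq_iff F1_def filiform_def has_succ_def succ_idx_def)

lemma F2_eq_filiform: "3 \<le> n \<Longrightarrow> F2 n = filiform n False"
  by (auto simp: fun_eq_iff F2_def filiform_def has_succ_def succ_idx_def)

text \<open>The matrix of \<open>x \<mapsto> [A x, e\<^sub>1]\<close> in \<open>filiform n b\<close>.\<close>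

definition right_e1 :: "nat \<Rightarrow> bool \<Rightarrow> matrix \<Rightarrow> matrix" where
  "right_e1 n b A k i = (if k = 3 then A 1 i + (if b then A 2 i else 0)
     else if 4 \<le> k \<and> k \<le> n then A (k - 1) i else 0)"

lemma has_succ_succ_idx: "3 \<le> n \<Longrightarrow> has_succ n b i \<Longrightarrow> succ_idx i \<in> {3..n}"
  by (auto simp: has_succ_def succ_idx_def)

lemma sum_filiform_left:
  "3 \<le> n \<Longrightarrow> (\<Sum>m\<in>{1..n}. filiform n b i j m * A k m) =
     (if j = 1 \<and> has_succ n b i then A k (succ_idx i) else 0)"
  using has_succ_succ_idx[of n b i]
  by (auto simp: filiform_def if_distrib[of "\<lambda>z. z * _"] cong: if_cong)

lemma sum_filiform_mid:
  assumes n: "3 \<le> n" and k: "k \<in> {1..n}"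
  shows "(\<Sum>a\<in>{1..n}. A a i * filiform n b a j k) = (if j = 1 then right_e1 n b A k i else 0)"
proof -
  have "(\<Sum>a\<in>{1..n}. A a i * filiform n b a j k) =
      sum (\<lambda>a. A a i) {a\<in>{1..n}. j = 1 \<and> has_succ n b a \<and> k = succ_idx a}"
    unfolding sum.inter_filter[OF finite_atLeastAtMost]
    by (simp add: filiform_def if_distrib[of "\<lambda>z. _ * z"] cong: if_cong)
  also have "{a\<in>{1..n}. j = 1 \<and> has_succ n b a \<and> k = succ_idx a} =
      (if j \<noteq> 1 then {} else if k = 3 then (if b then {1, 2} else {1})
       else if 4 \<le> k then {k - 1} else {})"
    using n k by (auto simp: has_succ_def succ_idx_def)
  finally show ?thesis
    using k by (simp add: right_e1_def)
qed

lemma sum_filiform_right: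
  "(\<Sum>a\<in>{1..n}. A a j * filiform n b i a k) =
     (if has_succ n b i \<and> k = succ_idx i then A 1 j else 0)"
  by (auto simp: filiform_def if_distrib[of "\<lambda>z. _ * z"] has_succ_def cong: if_cong)

definition filiform_eqs :: "nat \<Rightarrow> bool \<Rightarrow> matrix \<Rightarrow> matrix \<Rightarrow> bool" where
  "filiform_eqs n b A B \<longleftrightarrow>
     (\<forall>i\<in>{1..n}. \<forall>j\<in>{1..n}. \<forall>k\<in>{1..n}.
       (if j = 1 \<and> has_succ n b i then A k (succ_idx i) else 0) =
       (if j = 1 then right_e1 n b A k i else 0) +
       (if has_succ n b i \<and> k = succ_idx i then A 1 j else 0)) \<and>
     (\<forall>i\<in>{1..n}. \<forall>j\<in>{1..n}. \<forall>k\<in>{1..n}.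
       (if j = 1 \<and> has_succ n b i then B k (succ_idx i) else 0) =
       (if j = 1 then right_e1 n b B k i else 0) - (if i = 1 then right_e1 n b B k j else 0)) \<and>
     (\<forall>i\<in>{1..n}. \<forall>j\<in>{1..n}. \<forall>k\<in>{1..n}.
       (if has_succ n b i \<and> k = succ_idx i then A 1 j else 0) =
       (if has_succ n b i \<and> k = succ_idx i then B 1 j else 0))"

lemma bider_eqs_filiform_iff:
  assumes n: "3 \<le> n"
  shows "bider_eqs n (filiform n b) A B \<longleftrightarrow> filiform_eqs n b A B"
  unfolding bider_eqs_def filiform_eqs_def sum_filiform_left[OF n] sum_filiform_right
  by (intro conj_cong ball_cong refl) (simp_all only: sum_filiform_mid[OF n])

lemma
  assumes "filiform_eqs n b A B" "i \<in> {1..n}" "j \<in> {1..n}" "k \<in> {1..n}"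
  shows filiform_eqs_derivation: "(if j = 1 \<and> has_succ n b i then A k (succ_idx i) else 0) =
       (if j = 1 then right_e1 n b A k i else 0) +
       (if has_succ n b i \<and> k = succ_idx i then A 1 j else 0)"
    and filiform_eqs_antiderivation: "(if j = 1 \<and> has_succ n b i then B k (succ_idx i) else 0) =
       (if j = 1 then right_e1 n b B k i else 0) - (if i = 1 then right_e1 n b B k j else 0)"
    and filiform_eqs_compatibility: "(if has_succ n b i \<and> k = succ_idx i then A 1 j else 0) =
       (if has_succ n b i \<and> k = succ_idx i then B 1 j else 0)"
  using assms unfolding filiform_eqs_def by blast+

lemma succ_idx_onto:
  assumes "c \<in> {3..n}"
  obtains i where "has_succ n b i" "succ_idx i = c" "i \<noteq> 2"
proof (cases "c = 3")
  case True
  then show ?thesis using that[of 1] assms by (simp add: has_succ_def succ_idx_def)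
next
  case False
  then have "has_succ n b (c - 1)" "succ_idx (c - 1) = c" "c - 1 \<noteq> 2"
    using assms by (auto simp: has_succ_def succ_idx_def)
  then show ?thesis using that by blast
qed

context
  fixes n b and A B :: matrix
  assumes n: "3 \<le> n" and E: "filiform_eqs n b A B"
begin

lemma filiform_A_row1: "j \<in> {2..n} \<Longrightarrow> A 1 j = 0"
  using filiform_eqs_derivation[OF E, of 1 j 3] n by (auto simp: has_succ_def succ_idx_def)

lemma filiform_B_row1: "j \<in> {1..n} \<Longrightarrow> B 1 j = A 1 j"
  using filiform_eqs_compatibility[OF E, of 1 j 3] n by (auto simp: has_succ_def succ_idx_def)

lemma filiform_right_e1_B: "j \<in> {2..n} \<Longrightarrow> k \<in> {1..n} \<Longrightarrow> right_e1 n b B k j = 0"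
  using filiform_eqs_antiderivation[OF E, of 1 j k] n by simp

lemma filiform_A_succ:
  assumes "has_succ n b i" "k \<in> {1..n}"
  shows "A k (succ_idx i) = right_e1 n b A k i + (if k = succ_idx i then A 1 1 else 0)"
  using filiform_eqs_derivation[OF E, of i 1 k] n assms by (auto simp: has_succ_def)

lemma filiform_right_e1_A_no_succ:
  "i \<in> {2..n} \<Longrightarrow> \<not> has_succ n b i \<Longrightarrow> k \<in> {1..n} \<Longrightarrow> right_e1 n b A k i = 0"
  using filiform_eqs_derivation[OF E, of i 1 k] n by simp

lemma filiform_B_high_col:
  assumes c: "c \<in> {3..n}" and r: "r \<in> {1..n}"
  shows "B r c = 0"
proof -
  obtain i where i: "has_succ n b i" "succ_idx i = c" "i \<noteq> 2"
    using succ_idx_onto[OF c] .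
  then have "B r c = right_e1 n b B r i - (if i = 1 then right_e1 n b B r 1 else 0)"
    using filiform_eqs_antiderivation[OF E, of i 1 r] r n by (auto simp: has_succ_def)
  then show ?thesis
    using filiform_right_e1_B[of i r] i r by (auto simp: has_succ_def)
qed

lemma filiform_A_row2_high_col:
  assumes c: "c \<in> {3..n}"
  shows "A 2 c = 0"
proof -
  obtain i where "has_succ n b i" "succ_idx i = c"
    using succ_idx_onto[OF c] .
  then show ?thesis
    using filiform_A_succ[of i 2] c n by (auto simp: right_e1_def)
qed

lemma filiform_B_eq_0:
  assumes "A 1 1 = 0" "\<forall>a\<in>{2..n}. B a 1 = 0" "B 2 2 = 0" "B n 2 = 0"
    and r: "r \<in> {1..n}" and c: "c \<in> {1..n}"
  shows "B r c = 0"
proof -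
  consider "c = 1" | "c = 2" | "c \<in> {3..n}" using c by force
  then show ?thesis
  proof cases
    case 1
    then show ?thesis using assms filiform_B_row1[of 1] n by (cases "r = 1") auto
  next
    case 2
    have "B r 2 = 0" if "3 \<le> r" "r < n"
      using filiform_right_e1_B[of 2 "r + 1"] that n by (simp add: right_e1_def)
    then show ?thesis
      using 2 assms r filiform_B_row1[of 2] filiform_A_row1[of 2] n
      by (cases "r = 1 \<or> r = 2 \<or> r = n") auto
  next
    case 3
    then show ?thesis using filiform_B_high_col r by blast
  qed
qed

end

lemma filiform1_A_eq_0:
  assumes n: "3 \<le> n" and E: "filiform_eqs n True A B"
    and A11: "A 1 1 = 0" and last_row: "\<forall>k\<in>{1..n}. A n k = 0"
    and r: "r \<in> {1..n}" and c: "c \<in> {1..n}"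
  shows "A r c = 0"
proof -
  have step: "A (r + 1) (k + 1) = A r k" if "3 \<le> r" "r < n" "2 \<le> k" "k < n" for r k
    using filiform_A_succ[OF n E, of k "r + 1"] that A11
    by (simp add: has_succ_def succ_idx_def right_e1_def)
  have last_col: "A r n = 0" if "3 \<le> r" "r \<le> n" for r
  proof (cases "r = n")
    case False
    then show ?thesis
      using filiform_right_e1_A_no_succ[OF n E, of n "r + 1"] that
      by (simp add: has_succ_def right_e1_def)
  qed (use last_row n in auto)
  have box: "A r k = 0" if "3 \<le> r" "r \<le> n" "2 \<le> k" "k \<le> n" for r k
    using diagonal_shift_vanishes[of 3 n 2 A, OF step _ last_col] last_row that by auto
  have A33: "A 3 3 = A 1 1 + A 2 1 + A 1 1" "A 3 3 = A 1 2 + A 2 2 + A 1 1"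
    using filiform_A_succ[OF n E, of 1 3] filiform_A_succ[OF n E, of 2 3] n
    by (simp_all add: has_succ_def succ_idx_def right_e1_def)
  have col1: "A r 1 = 0" if "3 \<le> r" "r < n" for r
    using filiform_A_succ[OF n E, of 1 "r + 1"] box[of "r + 1" 3] that
    by (simp add: has_succ_def succ_idx_def right_e1_def)
  consider "r = 1" | "r = 2" | "3 \<le> r" using r by force
  then show ?thesis
  proof cases
    case 1
    then show ?thesis using A11 filiform_A_row1[OF n E, of c] c by (cases "c = 1") auto
  next
    case 2
    then show ?thesis
      using A33 box[of 3 3] A11 filiform_A_row1[OF n E, of 2] filiform_A_row2_high_col[OF n E, of c]
        n c
      by (cases "c = 1 \<or> c = 2") auto
  next
    case 3
    then show ?thesis
      using box[of r c] col1[of r] last_row r c by (cases "c = 1 \<and> r < n") auto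
  qed
qed

lemma filiform2_A_eq_0:
  assumes n: "3 \<le> n" and E: "filiform_eqs n False A B"
    and A_low: "A 1 1 = 0" "A 2 1 = 0" "A 2 2 = 0" and last_row: "\<forall>k\<in>{1..n-1}. A n k = 0"
    and r: "r \<in> {1..n}" and c: "c \<in> {1..n}"
  shows "A r c = 0"
proof -
  have step: "A (r + 1) (k + 1) = A r k" if "3 \<le> r" "r < n" "3 \<le> k" "k < n" for r k
    using filiform_A_succ[OF n E, of k "r + 1"] that A_low
    by (simp add: has_succ_def succ_idx_def right_e1_def)
  have "A 3 3 = 0"
    using filiform_A_succ[OF n E, of 1 3] n A_low
    by (simp add: has_succ_def succ_idx_def right_e1_def)
  then have Ann: "A n n = 0"
    using diagonal_shift_eq[where M = A and rlo = 3 and klo = 3 and n = n, OF step, of 3 3 "n - 3"] n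
    by simp
  have last_row': "A n k = 0" if "3 \<le> k" "k \<le> n" for k
    using last_row Ann that by (cases "k = n") auto
  have no_succ: "A r k = 0" if "k = 2 \<or> k = n" "3 \<le> r" "r < n" for r k
    using filiform_right_e1_A_no_succ[OF n E, of k "r + 1"] that n
    by (auto simp: has_succ_def right_e1_def)
  have last_col: "A r n = 0" if "3 \<le> r" "r \<le> n" for r
    using no_succ[of n r] Ann that by (cases "r = n") auto
  have box: "A r k = 0" if "3 \<le> r" "r \<le> n" "3 \<le> k" "k \<le> n" for r k
    using diagonal_shift_vanishes[of 3 n 3 A, OF step last_row' last_col] that by auto
  have col1: "A r 1 = 0" if "3 \<le> r" "r < n" for r
    using filiform_A_succ[OF n E, of 1 "r + 1"] box[of "r + 1" 3] that
    by (simp add: has_succ_def succ_idx_def right_e1_def)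
  consider "r = 1" | "r = 2" | "3 \<le> r" using r by force
  then show ?thesis
  proof cases
    case 1
    then show ?thesis using A_low filiform_A_row1[OF n E, of c] c by (cases "c = 1") auto
  next
    case 2
    then show ?thesis
      using A_low filiform_A_row2_high_col[OF n E, of c] c by (cases "c = 1 \<or> c = 2") auto
  next
    case 3
    then show ?thesis
      using box[of r c] col1[of r] no_succ[of 2 r] last_row r c n
      by (cases "c = 1 \<or> c = 2"; cases "r < n") auto
  qed
qed

section \<open>Explicit bases\<close>

definition unit_matrix :: "nat \<Rightarrow> nat \<Rightarrow> matrix" where
  "unit_matrix r k = (\<lambda>a b. if a = r \<and> b = k then 1 else 0)"

definition shift_matrix :: "nat \<Rightarrow> bool \<Rightarrow> nat \<Rightarrow> matrix" where
  "shift_matrix n b c r k =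
    (if ((if b then 2 else 3) \<le> k \<and> k < r \<and> r + c = n + k) \<or>
        (k = 1 \<and> 3 \<le> r \<and> r < n \<and> r + c = n + 2)
     then 1 else 0)"

definition tail_identity :: matrix where
  "tail_identity r k = (if (r = k \<and> 2 \<le> r) \<or> (r = 2 \<and> k = 1) then 1 else 0)"

definition grading1 :: "nat \<Rightarrow> matrix" where
  "grading1 n r k = (if r = 1 \<and> k = 1 then 1 else if r = k \<and> 2 \<le> r then of_nat r - of_nat n
     else if r = 2 \<and> k = 1 then 1 - of_nat n else 0)"

definition grading2 :: matrix where
  "grading2 r k = (if r = 1 \<and> k = 1 then 1 else if r = k \<and> 3 \<le> r then of_nat r - 1 else 0)"

lemmas filiform_eqs_defs = filiform_eqs_def right_e1_def succ_idx_def has_succ_def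

lemma filiform_eqs_unit_B_col1:
  "3 \<le> n \<Longrightarrow> a \<in> {2..n} \<Longrightarrow> filiform_eqs n b 0 (unit_matrix a 1)"
  unfolding filiform_eqs_defs unit_matrix_def by auto

lemma filiform_eqs_unit_B_n2: "3 \<le> n \<Longrightarrow> filiform_eqs n b 0 (unit_matrix n 2)"
  unfolding filiform_eqs_defs unit_matrix_def by auto

lemma filiform_eqs_unit_A_n1: "3 \<le> n \<Longrightarrow> filiform_eqs n b (unit_matrix n 1) 0"
  unfolding filiform_eqs_defs unit_matrix_def by auto

lemma filiform_eqs_shift:
  "3 \<le> n \<Longrightarrow> c \<in> {(if b then 2 else 3)..<n} \<Longrightarrow> filiform_eqs n b (shift_matrix n b c) 0"
  unfolding filiform_eqs_defs shift_matrix_def by auto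

lemma filiform_eqs_tail_identity: "3 \<le> n \<Longrightarrow> filiform_eqs n True tail_identity 0"
  unfolding filiform_eqs_defs tail_identity_def by auto

lemma filiform_eqs_grading1: "3 \<le> n \<Longrightarrow> filiform_eqs n True (grading1 n) (unit_matrix 1 1)"
  unfolding filiform_eqs_defs grading1_def unit_matrix_def by (auto simp: of_nat_Suc algebra_simps)

lemma filiform_eqs_grading2: "3 \<le> n \<Longrightarrow> filiform_eqs n False grading2 (unit_matrix 1 1)"
  unfolding filiform_eqs_defs grading2_def unit_matrix_def by (auto simp: of_nat_Suc algebra_simps)

lemma filiform_eqs_unit_F2:
  assumes "3 \<le> n"
  shows "filiform_eqs n False (unit_matrix 2 1) 0" "filiform_eqs n False (unit_matrix 2 2) 0"
    "filiform_eqs n False (unit_matrix n 2) 0" "filiform_eqs n False 0 (unit_matrix 2 2)"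
  using assms unfolding filiform_eqs_defs unit_matrix_def by auto

definition coords1 :: "nat \<Rightarrow> (bool \<times> nat \<times> nat) set" where
  "coords1 n = insert (False, 1, 1) (insert (True, n, 2)
     ((\<lambda>k. (False, n, k)) ` {1..n} \<union> (\<lambda>r. (True, r, 1)) ` {2..n}))"

definition basis1 :: "nat \<Rightarrow> bool \<times> nat \<times> nat \<Rightarrow> matrix \<times> matrix" where
  "basis1 n p = (case p of (s, r, k) \<Rightarrow>
     if s then (0, unit_matrix r k)
     else if r = 1 then (grading1 n, unit_matrix 1 1)
     else if k = n then (tail_identity, 0)
     else if k = 1 then (unit_matrix n 1, 0)
     else (shift_matrix n True k, 0))"

lemma card_coords1:
  assumes "3 \<le> n"
  shows "card (coords1 n) = 2 * n + 1"
proof -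
  have "card ((\<lambda>k. (False, n, k)) ` {1..n} \<union> (\<lambda>r. (True, r, 1::nat)) ` {2..n}) = n + (n - 1)"
    by (subst card_Un_disjoint) (auto simp: card_image inj_on_def)
  then show ?thesis
    using assms by (simp add: coords1_def card_insert_if image_iff)
qed

lemma dim_Bider_filiform1:
  assumes n: "3 \<le> n"
  shows "cdim (Bider n (filiform n True)) = 2 * n + 1"
proof -
  have "cdim (Bider n (filiform n True)) = card (coords1 n)"
  proof (rule dim_Bider_eq_card[where bas = "basis1 n"])
    show "finite (coords1 n)" by (simp add: coords1_def)
    show "r \<in> {1..n} \<and> k \<in> {1..n}" if "(s, r, k) \<in> coords1 n" for s r k
      using that n by (auto simp: coords1_def)
  next
    fix p assume "p \<in> coords1 n"
    then have "filiform_eqs n True (fst (basis1 n p)) (snd (basis1 n p))"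
      using n by (auto simp del: One_nat_def simp: coords1_def basis1_def filiform_eqs_unit_B_col1
          filiform_eqs_unit_B_n2 filiform_eqs_unit_A_n1 filiform_eqs_shift filiform_eqs_tail_identity
          filiform_eqs_grading1)
    then show "bider_eqs n (filiform n True) (fst (basis1 n p)) (snd (basis1 n p))"
      using bider_eqs_filiform_iff[OF n] by simp
  next
    fix p q assume "p \<in> coords1 n" "q \<in> coords1 n"
    then show "pair_entry p (basis1 n q) = (if p = q then 1 else 0)"
      using n by (auto simp: coords1_def basis1_def pair_entry_def unit_matrix_def shift_matrix_def
          tail_identity_def grading1_def split: if_splits)
  next
    fix A B assume "bider_eqs n (filiform n True) A B"
      and coords: "\<And>p. p \<in> coords1 n \<Longrightarrow> pair_entry p (A, B) = 0"
    then have E: "filiform_eqs n True A B"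
      using bider_eqs_filiform_iff[OF n] by simp
    have B22: "B 2 2 = 0"
      using filiform_right_e1_B[OF n E, of 2 3] filiform_B_row1[OF n E, of 2]
        filiform_A_row1[OF n E, of 2] n
      by (simp add: right_e1_def)
    have coord_zero: "(if s then B r k else A r k) = 0" if "(s, r, k) \<in> coords1 n" for s r k
      using coords[OF that] by (cases s) (simp_all add: pair_entry_def)
    have "A 1 1 = 0" "\<forall>k\<in>{1..n}. A n k = 0" "\<forall>a\<in>{2..n}. B a 1 = 0" "B n 2 = 0"
      using coord_zero[of False 1 1] coord_zero[of False n] coord_zero[of True _ 1]
        coord_zero[of True n 2]
      by (auto simp: coords1_def)
    then show "\<forall>r\<in>{1..n}. \<forall>k\<in>{1..n}. A r k = 0 \<and> B r k = 0"
      using filiform1_A_eq_0[OF n E] filiform_B_eq_0[OF n E _ _ B22] by blast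
  qed
  then show ?thesis using card_coords1[OF n] by simp
qed

definition coords2 :: "nat \<Rightarrow> (bool \<times> nat \<times> nat) set" where
  "coords2 n = {(False, 1, 1), (False, 2, 1), (False, 2, 2), (True, 2, 2), (True, n, 2)} \<union>
     ((\<lambda>k. (False, n, k)) ` {1..<n} \<union> (\<lambda>r. (True, r, 1)) ` {2..n})"

definition basis2 :: "nat \<Rightarrow> bool \<times> nat \<times> nat \<Rightarrow> matrix \<times> matrix" where
  "basis2 n p = (case p of (s, r, k) \<Rightarrow>
     if s then (0, unit_matrix r k)
     else if r = 1 then (grading2, unit_matrix 1 1)
     else if r = 2 \<or> k = 1 \<or> k = 2 then (unit_matrix r k, 0)
     else (shift_matrix n False k, 0))"

lemma card_coords2:
  assumes "3 \<le> n"
  shows "card (coords2 n) = 2 * n + 3"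
proof -
  have "card ((\<lambda>k. (False, n, k)) ` {1..<n} \<union> (\<lambda>r. (True, r, 1::nat)) ` {2..n}) = (n - 1) + (n - 1)"
    by (subst card_Un_disjoint) (auto simp: card_image inj_on_def)
  moreover have "card {(False, 1, 1), (False, 2, 1), (False, 2, 2), (True, 2, 2), (True, n, 2::nat)} = 5"
    using assms by simp
  ultimately show ?thesis
    using assms unfolding coords2_def by (subst card_Un_disjoint) auto
qed

lemma dim_Bider_filiform2:
  assumes n: "3 \<le> n"
  shows "cdim (Bider n (filiform n False)) = 2 * n + 3"
proof -
  have "cdim (Bider n (filiform n False)) = card (coords2 n)"
  proof (rule dim_Bider_eq_card[where bas = "basis2 n"])
    show "finite (coords2 n)" by (simp add: coords2_def)
    show "r \<in> {1..n} \<and> k \<in> {1..n}" if "(s, r, k) \<in> coords2 n" for s r k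
      using that n by (auto simp: coords2_def)
  next
    fix p assume "p \<in> coords2 n"
    then have "filiform_eqs n False (fst (basis2 n p)) (snd (basis2 n p))"
      using n by (auto simp del: One_nat_def simp: coords2_def basis2_def filiform_eqs_unit_B_col1
          filiform_eqs_unit_B_n2 filiform_eqs_unit_A_n1 filiform_eqs_shift filiform_eqs_grading2
          filiform_eqs_unit_F2)
    then show "bider_eqs n (filiform n False) (fst (basis2 n p)) (snd (basis2 n p))"
      using bider_eqs_filiform_iff[OF n] by simp
  next
    fix p q assume "p \<in> coords2 n" "q \<in> coords2 n"
    then show "pair_entry p (basis2 n q) = (if p = q then 1 else 0)"
      using n by (auto simp: coords2_def basis2_def pair_entry_def unit_matrix_def shift_matrix_def
          grading2_def split: if_splits)
  next
    fix A B assume "bider_eqs n (filiform n False) A B"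
      and coords: "\<And>p. p \<in> coords2 n \<Longrightarrow> pair_entry p (A, B) = 0"
    then have E: "filiform_eqs n False A B"
      using bider_eqs_filiform_iff[OF n] by simp
    have coord_zero: "(if s then B r k else A r k) = 0" if "(s, r, k) \<in> coords2 n" for s r k
      using coords[OF that] by (cases s) (simp_all add: pair_entry_def)
    have "A 1 1 = 0" "A 2 1 = 0" "A 2 2 = 0" "\<forall>k\<in>{1..n-1}. A n k = 0"
      "\<forall>a\<in>{2..n}. B a 1 = 0" "B 2 2 = 0" "B n 2 = 0"
      using coord_zero[of False 1 1] coord_zero[of False 2 1] coord_zero[of False 2 2]
        coord_zero[of False n] coord_zero[of True _ 1] coord_zero[of True 2 2] coord_zero[of True n 2] n
      by (auto simp: coords2_def)
    then show "\<forall>r\<in>{1..n}. \<forall>k\<in>{1..n}. A r k = 0 \<and> B r k = 0"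
      using filiform2_A_eq_0[OF n E] filiform_B_eq_0[OF n E] by blast
  qed
  then show ?thesis using card_coords2[OF n] by simp
qed

theorem mainTheorem6:
  fixes n :: nat
  assumes "n \<ge> 3"
  shows "cdim (Bider n (F1 n)) = 2 * n + 1 \<and> cdim (Bider n (F2 n)) = 2 * n + 3"
  using dim_Bider_filiform1[OF assms] dim_Bider_filiform2[OF assms]
  by (simp add: F1_eq_filiform[OF assms] F2_eq_filiform[OF assms])

end
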